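(* Let $\mathcal X$ be a Scott set, $T\in\mathcal X$ a complete consistent extension of $\mathrm{PA}$, $M\models T$ a model coded in $\mathcal X$, and $U$ a non-principal ultrafilter on the Boolean algebra $\mathcal X$. Then $K=\prod_{\mathcal X}M/U$ is an elementary extension of $M$ (via $c\mapsto[\bar c]$, $\bar c$ the constant function) and $K$ is recursively saturated.
   Context: A Scott set is a nonempty $\mathcal X\subseteq\mathcal P(\omega)$ closed under finite unions, complements and Turing reducibility, such that every theory in $\mathcal X$ has a complete consistent extension in $\mathcal X$. $M$ is coded in $\mathcal X$ if (up to isomorphism) its domain is a subset of $\omega$ belonging to $\mathcal X$ and its elementary diagram $\mathrm{Th}(M,a)_{a\in M}$ (as a set of Gödel numbers) belongs to $\mathcal X$. $\prod_{\mathcal X}M$ is the set of functions $f:\omega\to M$ whose graphs (coded via pairing) belong to $\mathcal X$. For an ultrafilter $U$ on $\mathcal X$, $f\equiv_U g$ iff $\{n:f(n)=g(n)\}\in U$, and $\prod_{\mathcal X}M/U$ is the set of $\equiv_U$-classes with $+,\cdot,<,0,1$ interpreted pointwise (mod $U$). Recursively saturated: every type over the model with finitely many parameters whose set of formulas is recursive is realized. *)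

theory Defs
  imports Main "HOL-Library.Nat_Bijection"
begin

section \<open>Oracle computability (mu-recursive functions with an oracle)\<close>

datatype recf = RZero | RSuc | RProj nat | ROracle | RComp recf "recf list"
  | RPrec recf recf | RMin recf

inductive reval :: "nat set \<Rightarrow> recf \<Rightarrow> nat list \<Rightarrow> nat \<Rightarrow> bool" for A where
  "reval A RZero xs 0"
| "reval A RSuc (x # xs) (Suc x)"
| "i < length xs \<Longrightarrow> reval A (RProj i) xs (xs ! i)"
| "reval A ROracle (x # xs) (if x \<in> A then 1 else 0)"
| "list_all2 (\<lambda>g y. reval A g xs y) gs ys \<Longrightarrow> reval A f ys r \<Longrightarrow> reval A (RComp f gs) xs r"
| "reval A f xs r \<Longrightarrow> reval A (RPrec f g) (0 # xs) r"
| "reval A (RPrec f g) (n # xs) s \<Longrightarrow> reval A g (s # n # xs) r \<Longrightarrow> reval A (RPrec f g) (Suc n # xs) r"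
| "reval A f (n # xs) 0 \<Longrightarrow> (\<forall>m<n. \<exists>k. reval A f (m # xs) (Suc k)) \<Longrightarrow> reval A (RMin f) xs n"

definition turing_le :: "nat set \<Rightarrow> nat set \<Rightarrow> bool" where
  "turing_le B A \<longleftrightarrow> (\<exists>f. \<forall>n. reval A f [n] (if n \<in> B then 1 else 0))"

definition recursive_set :: "nat set \<Rightarrow> bool" where
  "recursive_set B \<longleftrightarrow> turing_le B {}"

section \<open>First-order language of arithmetic (0,1,+,*,<) with constants c_n, n in omega\<close>

datatype trm = TVar nat | TCst nat | TZero | TOne | TPlus trm trm | TTimes trm trm

datatype fm = FEq trm trm | FLt trm trm | FNeg fm | FImp fm fm | FAll nat fm

definition FConj :: "fm \<Rightarrow> fm \<Rightarrow> fm" where "FConj p q = FNeg (FImp p (FNeg q))"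
definition FIff :: "fm \<Rightarrow> fm \<Rightarrow> fm" where "FIff p q = FConj (FImp p q) (FImp q p)"
definition FEx :: "nat \<Rightarrow> fm \<Rightarrow> fm" where "FEx x p = FNeg (FAll x (FNeg p))"

fun fvt :: "trm \<Rightarrow> nat set" where
  "fvt (TVar n) = {n}" | "fvt (TCst n) = {}" | "fvt TZero = {}" | "fvt TOne = {}"
| "fvt (TPlus a b) = fvt a \<union> fvt b" | "fvt (TTimes a b) = fvt a \<union> fvt b"

fun fv :: "fm \<Rightarrow> nat set" where
  "fv (FEq a b) = fvt a \<union> fvt b" | "fv (FLt a b) = fvt a \<union> fvt b"
| "fv (FNeg p) = fv p" | "fv (FImp p q) = fv p \<union> fv q" | "fv (FAll x p) = fv p - {x}"

fun cst_t :: "trm \<Rightarrow> nat set" where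
  "cst_t (TVar n) = {}" | "cst_t (TCst n) = {n}" | "cst_t TZero = {}" | "cst_t TOne = {}"
| "cst_t (TPlus a b) = cst_t a \<union> cst_t b" | "cst_t (TTimes a b) = cst_t a \<union> cst_t b"

fun csts :: "fm \<Rightarrow> nat set" where
  "csts (FEq a b) = cst_t a \<union> cst_t b" | "csts (FLt a b) = cst_t a \<union> cst_t b"
| "csts (FNeg p) = csts p" | "csts (FImp p q) = csts p \<union> csts q" | "csts (FAll x p) = csts p"

definition sentence :: "fm \<Rightarrow> bool" where "sentence p \<longleftrightarrow> fv p = {}"

definition langA :: "fm \<Rightarrow> bool" where "langA p \<longleftrightarrow> csts p = {}"

fun substt :: "nat \<Rightarrow> trm \<Rightarrow> trm \<Rightarrow> trm" where
  "substt x t (TVar n) = (if n = x then t else TVar n)" | "substt x t (TCst n) = TCst n"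
| "substt x t TZero = TZero" | "substt x t TOne = TOne"
| "substt x t (TPlus a b) = TPlus (substt x t a) (substt x t b)"
| "substt x t (TTimes a b) = TTimes (substt x t a) (substt x t b)"

fun subst :: "nat \<Rightarrow> trm \<Rightarrow> fm \<Rightarrow> fm" where
  "subst x t (FEq a b) = FEq (substt x t a) (substt x t b)"
| "subst x t (FLt a b) = FLt (substt x t a) (substt x t b)"
| "subst x t (FNeg p) = FNeg (subst x t p)"
| "subst x t (FImp p q) = FImp (subst x t p) (subst x t q)"
| "subst x t (FAll y p) = (if y = x then FAll y p else FAll y (subst x t p))"

fun substable :: "nat \<Rightarrow> trm \<Rightarrow> fm \<Rightarrow> bool" where
  "substable x t (FEq a b) = True" | "substable x t (FLt a b) = True"
| "substable x t (FNeg p) = substable x t p"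
| "substable x t (FImp p q) = (substable x t p \<and> substable x t q)"
| "substable x t (FAll y p) = (x \<notin> fv (FAll y p) \<or> (y \<notin> fvt t \<and> substable x t p))"

definition close :: "fm \<Rightarrow> fm" where
  "close p = foldr FAll (sorted_list_of_set (fv p)) p"

fun code_t :: "trm \<Rightarrow> nat" where
  "code_t (TVar n) = prod_encode (0, n)" | "code_t (TCst n) = prod_encode (1, n)"
| "code_t TZero = prod_encode (2, 0)" | "code_t TOne = prod_encode (3, 0)"
| "code_t (TPlus a b) = prod_encode (4, prod_encode (code_t a, code_t b))"
| "code_t (TTimes a b) = prod_encode (5, prod_encode (code_t a, code_t b))"

fun code :: "fm \<Rightarrow> nat" where
  "code (FEq a b) = prod_encode (0, prod_encode (code_t a, code_t b))"
| "code (FLt a b) = prod_encode (1, prod_encode (code_t a, code_t b))"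
| "code (FNeg p) = prod_encode (2, code p)"
| "code (FImp p q) = prod_encode (3, prod_encode (code p, code q))"
| "code (FAll x p) = prod_encode (4, prod_encode (x, code p))"

section \<open>Deduction (Hilbert calculus for first-order logic with equality)\<close>

inductive lax :: "fm \<Rightarrow> bool" where
  "lax (FImp p (FImp q p))"
| "lax (FImp (FImp p (FImp q r)) (FImp (FImp p q) (FImp p r)))"
| "lax (FImp (FImp (FNeg p) (FNeg q)) (FImp q p))"
| "substable x t p \<Longrightarrow> lax (FImp (FAll x p) (subst x t p))"
| "lax (FImp (FAll x (FImp p q)) (FImp (FAll x p) (FAll x q)))"
| "x \<notin> fv p \<Longrightarrow> lax (FImp p (FAll x p))"
| "lax (FEq (TVar x) (TVar x))"
| "lax (FImp (FEq (TVar x1) (TVar y1)) (FImp (FEq (TVar x2) (TVar y2))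
      (FEq (TPlus (TVar x1) (TVar x2)) (TPlus (TVar y1) (TVar y2)))))"
| "lax (FImp (FEq (TVar x1) (TVar y1)) (FImp (FEq (TVar x2) (TVar y2))
      (FEq (TTimes (TVar x1) (TVar x2)) (TTimes (TVar y1) (TVar y2)))))"
| "lax (FImp (FEq (TVar x1) (TVar y1)) (FImp (FEq (TVar x2) (TVar y2))
      (FImp (FEq (TVar x1) (TVar x2)) (FEq (TVar y1) (TVar y2)))))"
| "lax (FImp (FEq (TVar x1) (TVar y1)) (FImp (FEq (TVar x2) (TVar y2))
      (FImp (FLt (TVar x1) (TVar x2)) (FLt (TVar y1) (TVar y2)))))"

inductive prv :: "fm set \<Rightarrow> fm \<Rightarrow> bool" for G where
  hyp: "p \<in> G \<Longrightarrow> prv G p"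
| ax: "lax p \<Longrightarrow> prv G p"
| mp: "prv G (FImp p q) \<Longrightarrow> prv G p \<Longrightarrow> prv G q"
| gen: "prv G p \<Longrightarrow> (\<forall>q\<in>G. x \<notin> fv q) \<Longrightarrow> prv G (FAll x p)"

definition consistent :: "fm set \<Rightarrow> bool" where
  "consistent G \<longleftrightarrow> \<not> (\<exists>p. prv G p \<and> prv G (FNeg p))"

text \<open>Theories are represented as sets of Goedel numbers.\<close>
definition decode_set :: "nat set \<Rightarrow> fm set" where
  "decode_set A = {p. code p \<in> A}"

definition is_theory :: "nat set \<Rightarrow> bool" where
  "is_theory A \<longleftrightarrow> A \<subseteq> code ` {p. sentence p} \<and> consistent (decode_set A)"

definition complete_thy :: "nat set \<Rightarrow> bool" where
  "complete_thy S \<longleftrightarrow> (\<forall>p. sentence p \<longrightarrow> code p \<in> S \<or> code (FNeg p) \<in> S)"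

definition SucT :: "trm \<Rightarrow> trm" where "SucT t = TPlus t TOne"

inductive PA_ax :: "fm \<Rightarrow> bool" where
  "PA_ax (close (FNeg (FEq (SucT (TVar 0)) TZero)))"
| "PA_ax (close (FImp (FEq (SucT (TVar 0)) (SucT (TVar 1))) (FEq (TVar 0) (TVar 1))))"
| "PA_ax (close (FEq (TPlus (TVar 0) TZero) (TVar 0)))"
| "PA_ax (close (FEq (TPlus (TVar 0) (SucT (TVar 1))) (SucT (TPlus (TVar 0) (TVar 1)))))"
| "PA_ax (close (FEq (TTimes (TVar 0) TZero) TZero))"
| "PA_ax (close (FEq (TTimes (TVar 0) (SucT (TVar 1))) (TPlus (TTimes (TVar 0) (TVar 1)) (TVar 0))))"
| "PA_ax (close (FIff (FLt (TVar 0) (TVar 1)) (FEx 2 (FEq (TPlus (TVar 0) (SucT (TVar 2))) (TVar 1)))))"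
| "langA p \<Longrightarrow> PA_ax (close (FImp (FConj (subst x TZero p)
       (FAll x (FImp p (subst x (SucT (TVar x)) p)))) (FAll x p)))"

definition compl_cons_ext_PA :: "nat set \<Rightarrow> bool" where
  "compl_cons_ext_PA T \<longleftrightarrow>
     T \<subseteq> code ` {p. sentence p \<and> langA p} \<and> consistent (decode_set T) \<and>
     code ` {p. PA_ax p} \<subseteq> T \<and>
     (\<forall>p. sentence p \<and> langA p \<longrightarrow> code p \<in> T \<or> code (FNeg p) \<in> T)"

definition scott_set :: "nat set set \<Rightarrow> bool" where
  "scott_set X \<longleftrightarrow> X \<noteq> {} \<and>
     (\<forall>A\<in>X. \<forall>B\<in>X. A \<union> B \<in> X) \<and>
     (\<forall>A\<in>X. - A \<in> X) \<and>
     (\<forall>A\<in>X. \<forall>B. turing_le B A \<longrightarrow> B \<in> X) \<and>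
     (\<forall>A\<in>X. is_theory A \<longrightarrow> (\<exists>S\<in>X. A \<subseteq> S \<and> is_theory S \<and> complete_thy S))"

section \<open>Structures and satisfaction\<close>

record 'a struc =
  dm :: "'a set"
  zr :: 'a
  on :: 'a
  ad :: "'a \<Rightarrow> 'a \<Rightarrow> 'a"
  ml :: "'a \<Rightarrow> 'a \<Rightarrow> 'a"
  lt :: "'a \<Rightarrow> 'a \<Rightarrow> bool"

definition is_struc :: "('a, 'b) struc_scheme \<Rightarrow> bool" where
  "is_struc S \<longleftrightarrow> zr S \<in> dm S \<and> on S \<in> dm S \<and>
     (\<forall>a\<in>dm S. \<forall>b\<in>dm S. ad S a b \<in> dm S \<and> ml S a b \<in> dm S)"

text \<open>c interprets the constants, e the variables.\<close>
fun tval :: "('a, 'b) struc_scheme \<Rightarrow> (nat \<Rightarrow> 'a) \<Rightarrow> (nat \<Rightarrow> 'a) \<Rightarrow> trm \<Rightarrow> 'a" where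
  "tval S c e (TVar n) = e n" | "tval S c e (TCst n) = c n"
| "tval S c e TZero = zr S" | "tval S c e TOne = on S"
| "tval S c e (TPlus a b) = ad S (tval S c e a) (tval S c e b)"
| "tval S c e (TTimes a b) = ml S (tval S c e a) (tval S c e b)"

fun sat :: "('a, 'b) struc_scheme \<Rightarrow> (nat \<Rightarrow> 'a) \<Rightarrow> (nat \<Rightarrow> 'a) \<Rightarrow> fm \<Rightarrow> bool" where
  "sat S c e (FEq a b) = (tval S c e a = tval S c e b)"
| "sat S c e (FLt a b) = lt S (tval S c e a) (tval S c e b)"
| "sat S c e (FNeg p) = (\<not> sat S c e p)"
| "sat S c e (FImp p q) = (sat S c e p \<longrightarrow> sat S c e q)"
| "sat S c e (FAll x p) = (\<forall>a\<in>dm S. sat S c (e(x := a)) p)"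

definition models :: "nat struc \<Rightarrow> nat set \<Rightarrow> bool" where
  "models M T \<longleftrightarrow> (\<forall>p. code p \<in> T \<longrightarrow> sat M id (\<lambda>_. zr M) p)"

text \<open>Elementary diagram Th(M,a)_{a in M}: constant c_a names a.\<close>
definition ediag :: "nat struc \<Rightarrow> nat set" where
  "ediag M = {code p | p. sentence p \<and> csts p \<subseteq> dm M \<and> sat M id (\<lambda>_. zr M) p}"

definition coded_in :: "nat struc \<Rightarrow> nat set set \<Rightarrow> bool" where
  "coded_in M X \<longleftrightarrow> dm M \<in> X \<and> ediag M \<in> X"

section \<open>Ultrafilters on X and the X-ultrapower\<close>

definition ultrafilter_on :: "nat set set \<Rightarrow> nat set set \<Rightarrow> bool" where
  "ultrafilter_on X U \<longleftrightarrow> U \<subseteq> X \<and> UNIV \<in> U \<and> {} \<notin> U \<and>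
     (\<forall>A\<in>U. \<forall>B\<in>U. A \<inter> B \<in> U) \<and>
     (\<forall>A\<in>U. \<forall>B\<in>X. A \<subseteq> B \<longrightarrow> B \<in> U) \<and>
     (\<forall>A\<in>X. A \<in> U \<or> - A \<in> U)"

definition nonprincipal :: "nat set set \<Rightarrow> bool" where
  "nonprincipal U \<longleftrightarrow> (\<forall>n. {n} \<notin> U)"

definition graph_code :: "(nat \<Rightarrow> nat) \<Rightarrow> nat set" where
  "graph_code f = {prod_encode (n, f n) | n. True}"

definition prodX :: "nat set set \<Rightarrow> nat struc \<Rightarrow> (nat \<Rightarrow> nat) set" where
  "prodX X M = {f. (\<forall>n. f n \<in> dm M) \<and> graph_code f \<in> X}"

definition ucls :: "nat set set \<Rightarrow> nat struc \<Rightarrow> nat set set \<Rightarrow> (nat \<Rightarrow> nat) \<Rightarrow> (nat \<Rightarrow> nat) set" where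
  "ucls X M U f = {g \<in> prodX X M. {n. f n = g n} \<in> U}"

definition urep :: "(nat \<Rightarrow> nat) set \<Rightarrow> (nat \<Rightarrow> nat)" where
  "urep a = (SOME f. f \<in> a)"

definition ultrapower :: "nat set set \<Rightarrow> nat struc \<Rightarrow> nat set set \<Rightarrow> (nat \<Rightarrow> nat) set struc" where
  "ultrapower X M U =
    \<lparr> dm = ucls X M U ` prodX X M,
      zr = ucls X M U (\<lambda>_. zr M),
      on = ucls X M U (\<lambda>_. on M),
      ad = (\<lambda>a b. ucls X M U (\<lambda>n. ad M (urep a n) (urep b n))),
      ml = (\<lambda>a b. ucls X M U (\<lambda>n. ml M (urep a n) (urep b n))),
      lt = (\<lambda>a b. {n. lt M (urep a n) (urep b n)} \<in> U) \<rparr>"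

definition elem_emb :: "('a, 'c) struc_scheme \<Rightarrow> ('b, 'd) struc_scheme \<Rightarrow> ('a \<Rightarrow> 'b) \<Rightarrow> bool" where
  "elem_emb M K h \<longleftrightarrow> h ` dm M \<subseteq> dm K \<and>
     (\<forall>p e. langA p \<longrightarrow> (\<forall>i. e i \<in> dm M) \<longrightarrow>
        (sat M (\<lambda>_. zr M) e p \<longleftrightarrow> sat K (\<lambda>_. zr K) (h \<circ> e) p))"

text \<open>Every recursive type p(x, y1..yk) in the language L_A over finitely many
  parameters (the values of the free variables other than x under e) which is
  finitely satisfiable in K is realized in K.\<close>
definition rec_saturated :: "('a, 'b) struc_scheme \<Rightarrow> bool" where
  "rec_saturated K \<longleftrightarrow>
    (\<forall>p x e. p \<subseteq> {q. langA q} \<longrightarrow> recursive_set (code ` p) \<longrightarrow>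
       finite (\<Union> (fv ` p)) \<longrightarrow> (\<forall>i. e i \<in> dm K) \<longrightarrow>
       (\<forall>p0 \<subseteq> p. finite p0 \<longrightarrow> (\<exists>a\<in>dm K. \<forall>q\<in>p0. sat K (\<lambda>_. zr K) (e(x := a)) q)) \<longrightarrow>
       (\<exists>a\<in>dm K. \<forall>q\<in>p. sat K (\<lambda>_. zr K) (e(x := a)) q))"

end

theory Submission
  imports Defs
begin

(* The ultrapower only uses coordinate functions whose graphs lie in X, so Los's theorem
   needs two things: every set {n. M |= phi(f_1 n, ..., f_k n)} lies in X, and every
   formula has a Skolem function in X. Both are computable from the join of the elementary
   diagram of M with the graphs of the f_i: satisfaction is a membership query to the
   diagram, and since the domain of M is a subset of omega a witness can be taken to be the
   least one. No Peano arithmetic is involved.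

   For recursive saturation, let phi_j be the conjunction of the members of the type p with
   code below j, let s n be the greatest j <= n such that phi_j is realizable at coordinate
   n, and let g n be the least realizer of phi_(s n). Then g is computable from the diagram,
   the parameters and p, so g lies in X. By finite satisfiability and Los, each phi_j is
   realizable at U-almost all coordinates, and by non-principality U-almost all n are >= j;
   hence the class of g realizes p. *)

section \<open>Computability relative to an oracle\<close>

definition computable :: "nat set \<Rightarrow> nat \<Rightarrow> (nat list \<Rightarrow> nat) \<Rightarrow> bool" where
  "computable A k F \<longleftrightarrow> (\<exists>g. \<forall>xs. length xs = k \<longrightarrow> reval A g xs (F xs))"

definition decidable :: "nat set \<Rightarrow> nat \<Rightarrow> (nat list \<Rightarrow> bool) \<Rightarrow> bool" where
  "decidable A k P \<longleftrightarrow> computable A k (\<lambda>xs. if P xs then 1 else 0)"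

lemma computable_cong:
  "computable A k F \<Longrightarrow> (\<And>xs. length xs = k \<Longrightarrow> F xs = G xs) \<Longrightarrow> computable A k G"
  unfolding computable_def by metis

lemma decidable_cong:
  "decidable A k P \<Longrightarrow> (\<And>xs. length xs = k \<Longrightarrow> P xs \<longleftrightarrow> Q xs) \<Longrightarrow> decidable A k Q"
  unfolding decidable_def by (erule computable_cong) auto

lemma computable_zero: "computable A k (\<lambda>_. 0)"
  unfolding computable_def by (auto intro: reval.intros)

lemma computable_proj: "i < k \<Longrightarrow> computable A k (\<lambda>xs. xs ! i)"
  unfolding computable_def by (auto intro!: exI[of _ "RProj i"] reval.intros(3))

lemma computable_hd: "computable A 1 hd"
  by (rule computable_cong[OF computable_proj[of 0 1]]) (auto simp: length_Suc_conv)

lemma computable_Suc_hd: "computable A 1 (\<lambda>xs. Suc (hd xs))"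
  unfolding computable_def
  by (rule exI[of _ RSuc]) (auto simp: length_Suc_conv intro: reval.intros(2)[where xs="[]", simplified])

lemma decidable_oracle: "decidable A 1 (\<lambda>xs. hd xs \<in> A)"
  unfolding decidable_def computable_def
proof (rule exI[of _ ROracle], intro allI impI)
  fix xs :: "nat list" assume "length xs = 1"
  then obtain y where "xs = [y]" by (auto simp: length_Suc_conv)
  then show "reval A ROracle xs (if hd xs \<in> A then 1 else 0)"
    using reval.intros(4)[of A y "[]"] by simp
qed

lemma computable_comp:
  assumes F: "computable A (length Gs) F" and Gs: "\<forall>G\<in>set Gs. computable A k G"
  shows "computable A k (\<lambda>xs. F (map (\<lambda>G. G xs) Gs))"
proof -
  from Gs have "\<exists>gs. \<forall>xs. length xs = k \<longrightarrow> list_all2 (\<lambda>g y. reval A g xs y) gs (map (\<lambda>G. G xs) Gs)"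
  proof (induction Gs)
    case (Cons G Gs)
    then obtain gs where "\<forall>xs. length xs = k \<longrightarrow> list_all2 (\<lambda>g y. reval A g xs y) gs (map (\<lambda>G. G xs) Gs)"
      by auto
    moreover from Cons.prems obtain g where "\<forall>xs. length xs = k \<longrightarrow> reval A g xs (G xs)"
      unfolding computable_def by auto
    ultimately show ?case by (intro exI[of _ "g # gs"]) auto
  qed simp
  then obtain gs where gs: "\<forall>xs. length xs = k \<longrightarrow> list_all2 (\<lambda>g y. reval A g xs y) gs (map (\<lambda>G. G xs) Gs)"
    by blast
  obtain f where f: "\<forall>ys. length ys = length Gs \<longrightarrow> reval A f ys (F ys)"
    using F unfolding computable_def by blast
  show ?thesis unfolding computable_def
    by (rule exI[of _ "RComp f gs"]) (auto intro!: reval.intros(5) gs[rule_format] f[rule_format])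
qed

lemma computable_comp1: "computable A 1 F \<Longrightarrow> computable A k G \<Longrightarrow> computable A k (\<lambda>xs. F [G xs])"
  using computable_comp[of A "[G]" F k] by simp

lemma computable_comp2:
  "computable A 2 F \<Longrightarrow> computable A k G \<Longrightarrow> computable A k H \<Longrightarrow> computable A k (\<lambda>xs. F [G xs, H xs])"
  using computable_comp[of A "[G, H]" F k] by (simp add: numeral_2_eq_2)

lemma computable_Suc: "computable A k G \<Longrightarrow> computable A k (\<lambda>xs. Suc (G xs))"
  using computable_comp1[OF computable_Suc_hd] by simp

lemma computable_const: "computable A k (\<lambda>_. c)"
  by (induction c) (auto intro: computable_zero computable_Suc)

fun prim_rec :: "(nat list \<Rightarrow> nat) \<Rightarrow> (nat list \<Rightarrow> nat) \<Rightarrow> nat \<Rightarrow> nat list \<Rightarrow> nat" where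
  "prim_rec f g 0 xs = f xs"
| "prim_rec f g (Suc n) xs = g (prim_rec f g n xs # n # xs)"

lemma computable_prim_rec:
  assumes "computable A k f" "computable A (Suc (Suc k)) g"
  shows "computable A (Suc k) (\<lambda>xs. prim_rec f g (hd xs) (tl xs))"
proof -
  obtain pf where pf: "\<forall>xs. length xs = k \<longrightarrow> reval A pf xs (f xs)"
    using assms(1) unfolding computable_def by blast
  obtain pg where pg: "\<forall>xs. length xs = Suc (Suc k) \<longrightarrow> reval A pg xs (g xs)"
    using assms(2) unfolding computable_def by blast
  have "reval A (RPrec pf pg) (n # ys) (prim_rec f g n ys)" if "length ys = k" for n ys
    by (induction n) (use pf pg that in \<open>auto intro: reval.intros(6,7)\<close>)
  then show ?thesis unfolding computable_def
    by (intro exI[of _ "RPrec pf pg"]) (auto simp: length_Suc_conv)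
qed

lemma computable_unary_prim_rec:
  assumes "computable A 2 g" "\<And>n. h (Suc n) = g [h n, n]"
  shows "computable A 1 (\<lambda>xs. h (hd xs))"
proof -
  have "computable A (Suc 0) (\<lambda>xs. prim_rec (\<lambda>_. h 0) g (hd xs) (tl xs))"
    by (rule computable_prim_rec) (use assms(1) in \<open>auto simp: numeral_2_eq_2 intro: computable_const\<close>)
  moreover have "prim_rec (\<lambda>_. h 0) g n [] = h n" for n
    by (induction n) (auto simp: assms(2))
  ultimately show ?thesis
    by (auto elim!: computable_cong simp: length_Suc_conv)
qed

lemma computable_binary_prim_rec:
  assumes "computable A 1 (\<lambda>xs. h 0 (hd xs))" "computable A 3 g"
    "\<And>n y. h (Suc n) y = g [h n y, n, y]"
  shows "computable A 2 (\<lambda>xs. h (xs ! 0) (xs ! 1))"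
proof -
  have "computable A (Suc 1) (\<lambda>xs. prim_rec (\<lambda>xs. h 0 (hd xs)) g (hd xs) (tl xs))"
    by (rule computable_prim_rec) (use assms(1,2) in \<open>auto simp: numeral_3_eq_3\<close>)
  moreover have "prim_rec (\<lambda>xs. h 0 (hd xs)) g n [y] = h n y" for n y
    by (induction n) (auto simp: assms(3))
  ultimately show ?thesis
    by (auto elim!: computable_cong simp: length_Suc_conv numeral_2_eq_2)
qed

lemma computable_mu:
  assumes "computable A (Suc k) f" "\<And>xs. length xs = k \<Longrightarrow> \<exists>n. f (n # xs) = 0"
  shows "computable A k (\<lambda>xs. LEAST n. f (n # xs) = 0)"
proof -
  obtain pf where pf: "\<forall>xs. length xs = Suc k \<longrightarrow> reval A pf xs (f xs)"
    using assms(1) unfolding computable_def by blast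
  have "reval A (RMin pf) xs (LEAST n. f (n # xs) = 0)" if "length xs = k" for xs
  proof (rule reval.intros(8))
    show "reval A pf ((LEAST n. f (n # xs) = 0) # xs) 0"
      using pf that LeastI_ex[OF assms(2)[OF that]] by (metis length_Cons)
    show "\<forall>m<(LEAST n. f (n # xs) = 0). \<exists>k. reval A pf (m # xs) (Suc k)"
    proof (intro allI impI)
      fix m assume "m < (LEAST n. f (n # xs) = 0)"
      then have "f (m # xs) \<noteq> 0" by (rule not_less_Least)
      then show "\<exists>k. reval A pf (m # xs) (Suc k)"
        using pf that by (metis length_Cons not0_implies_Suc)
    qed
  qed
  then show ?thesis unfolding computable_def by blast
qed

lemma computable_tl: "computable A k G \<Longrightarrow> computable A (Suc k) (\<lambda>xs. G (tl xs))"
  using computable_comp[of A "map (\<lambda>i xs. xs ! Suc i) [0..<k]" G "Suc k"]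
  by (auto simp: computable_proj elim!: computable_cong simp: length_Suc_conv o_def map_nth)

lemma computable_add:
  assumes "computable A k G" "computable A k H"
  shows "computable A k (\<lambda>xs. G xs + H xs)"
proof -
  have "computable A 3 (\<lambda>xs. Suc (xs ! 0))"
    by (intro computable_Suc computable_proj) simp
  then have "computable A 2 (\<lambda>xs. xs ! 0 + xs ! 1)"
    using computable_binary_prim_rec[of A "(+)"] computable_hd by simp
  from computable_comp2[OF this assms] show ?thesis
    by simp
qed

lemma computable_mult:
  assumes "computable A k G" "computable A k H"
  shows "computable A k (\<lambda>xs. G xs * H xs)"
proof -
  have "computable A 3 (\<lambda>xs. xs ! 0 + xs ! 2)"
    by (intro computable_add computable_proj) simp_all
  then have "computable A 2 (\<lambda>xs. xs ! 0 * xs ! 1)"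
    using computable_binary_prim_rec[of A "(*)"] computable_zero by simp
  from computable_comp2[OF this assms] show ?thesis
    by simp
qed

lemma computable_pred: "computable A 1 (\<lambda>xs. hd xs - 1)"
  by (rule computable_unary_prim_rec[of A "\<lambda>xs. xs ! 1" "\<lambda>n. n - 1"]) (auto intro: computable_proj)

lemma computable_diff:
  assumes "computable A k G" "computable A k H"
  shows "computable A k (\<lambda>xs. G xs - H xs)"
proof -
  have "computable A 3 (\<lambda>xs. xs ! 0 - 1)"
    using computable_comp1[OF computable_pred computable_proj[of 0 3]] by simp
  then have "computable A 2 (\<lambda>xs. xs ! 1 - xs ! 0)"
    using computable_binary_prim_rec[of A "\<lambda>n y. y - n"] computable_hd by simp
  from computable_comp2[OF this assms(2,1)] show ?thesis
    by simp
qed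

lemma decidable_le:
  assumes "computable A k G" "computable A k H"
  shows "decidable A k (\<lambda>xs. G xs \<le> H xs)"
proof -
  have "computable A k (\<lambda>xs. 1 - (G xs - H xs))"
    by (intro computable_diff computable_const assms)
  then show ?thesis unfolding decidable_def by (rule computable_cong) auto
qed

lemma decidable_eq:
  assumes "computable A k G" "computable A k H"
  shows "decidable A k (\<lambda>xs. G xs = H xs)"
proof -
  have "computable A k (\<lambda>xs. 1 - ((G xs - H xs) + (H xs - G xs)))"
    by (intro computable_diff computable_add computable_const assms)
  then show ?thesis unfolding decidable_def by (rule computable_cong) auto
qed

lemma decidable_not: "decidable A k P \<Longrightarrow> decidable A k (\<lambda>xs. \<not> P xs)"
  unfolding decidable_def by (rule computable_cong[OF computable_diff[OF computable_const]]) auto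

lemma decidable_conj:
  assumes "decidable A k P" "decidable A k Q"
  shows "decidable A k (\<lambda>xs. P xs \<and> Q xs)"
proof -
  have "computable A k (\<lambda>xs. (if P xs then 1 else 0) * (if Q xs then 1 else 0))"
    by (intro computable_mult assms[unfolded decidable_def])
  then show ?thesis unfolding decidable_def by (rule computable_cong) auto
qed

lemma decidable_less: "computable A k G \<Longrightarrow> computable A k H \<Longrightarrow> decidable A k (\<lambda>xs. G xs < H xs)"
  using decidable_not[OF decidable_le, of A k H G] by (simp add: not_le)

lemma decidable_disj: "decidable A k P \<Longrightarrow> decidable A k Q \<Longrightarrow> decidable A k (\<lambda>xs. P xs \<or> Q xs)"
  using decidable_not[OF decidable_conj[OF decidable_not decidable_not], of A k P Q] by simp

lemma computable_if:
  assumes "decidable A k P" "computable A k G" "computable A k H"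
  shows "computable A k (\<lambda>xs. if P xs then G xs else H xs)"
proof -
  have "computable A k (\<lambda>xs. (if P xs then 1 else 0) * G xs + (1 - (if P xs then 1 else 0)) * H xs)"
    by (intro computable_add computable_mult computable_diff computable_const assms[unfolded decidable_def] assms)
  then show ?thesis by (rule computable_cong) auto
qed

lemma computable_Least:
  assumes "decidable A (Suc k) P" "\<And>xs. length xs = k \<Longrightarrow> \<exists>n. P (n # xs)"
  shows "computable A k (\<lambda>xs. LEAST n. P (n # xs))"
proof -
  have "computable A k (\<lambda>xs. LEAST n. (if \<not> P (n # xs) then 1 else 0) = (0::nat))"
    using decidable_not[OF assms(1)] assms(2) unfolding decidable_def by (intro computable_mu) auto
  then show ?thesis by (rule computable_cong) (auto split: if_splits)
qed

lemma computable_triangle: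
  assumes "computable A k G"
  shows "computable A k (\<lambda>xs. triangle (G xs))"
proof -
  have "computable A 1 (\<lambda>xs. triangle (hd xs))"
    by (rule computable_unary_prim_rec[of A "\<lambda>xs. Suc (xs ! 0 + xs ! 1)"])
      (auto intro!: computable_Suc computable_add computable_proj)
  from computable_comp1[OF this assms] show ?thesis
    by simp
qed

lemma computable_prod_encode:
  "computable A k G \<Longrightarrow> computable A k H \<Longrightarrow> computable A k (\<lambda>xs. prod_encode (G xs, H xs))"
  unfolding prod_encode_def by (auto intro!: computable_add computable_triangle)

lemma less_triangle_Suc: "x < triangle (Suc x)"
  by (induction x) auto

lemma prod_decode_eq_Least:
  fixes x :: nat
  defines "s \<equiv> LEAST s. x < triangle (Suc s)"
  shows "prod_decode x = (x - triangle s, s - (x - triangle s))"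
proof -
  have s_upper: "x < triangle (Suc s)" unfolding s_def by (rule LeastI[of _ x, OF less_triangle_Suc])
  have s_lower: "triangle s \<le> x"
  proof (cases s)
    case (Suc t)
    then have "\<not> x < triangle (Suc t)" unfolding s_def using not_less_Least by (metis lessI)
    then show ?thesis using Suc by (simp del: triangle_Suc)
  qed simp
  then have "prod_encode (x - triangle s, s - (x - triangle s)) = x"
    using s_upper by (simp add: prod_encode_def)
  then show ?thesis by (metis prod_encode_inverse)
qed

lemma computable_prod_decode:
  assumes "computable A k G"
  shows "computable A k (\<lambda>xs. fst (prod_decode (G xs)))" "computable A k (\<lambda>xs. snd (prod_decode (G xs)))"
proof -
  have "decidable A (Suc k) (\<lambda>ys. G (tl ys) < triangle (Suc (ys ! 0)))"
    by (intro decidable_less computable_triangle computable_Suc computable_tl[OF assms] computable_proj) simp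
  moreover have "\<exists>s. x < triangle (Suc s)" for x
    using less_triangle_Suc by blast
  ultimately have "computable A k (\<lambda>xs. LEAST s. G xs < triangle (Suc s))"
    using computable_Least[where P="\<lambda>ys. G (tl ys) < triangle (Suc (ys ! 0))"] by simp
  then show "computable A k (\<lambda>xs. fst (prod_decode (G xs)))" "computable A k (\<lambda>xs. snd (prod_decode (G xs)))"
    by (auto simp del: triangle_Suc simp: prod_decode_eq_Least intro!: computable_diff computable_triangle assms)
qed

text \<open>The \<open>\<mu>\<close>-operator searches upwards, so the greatest \<open>j \<le> n\<close> with \<open>P j\<close> is computed
  as \<open>n - i\<close> for the least \<open>i\<close> with \<open>P (n - i)\<close>.\<close>

lemma greatest_below_via_Least:
  fixes P :: "nat \<Rightarrow> bool"
  assumes "P 0"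
  shows "P (n - (LEAST i. P (n - i)))" "j \<le> n \<Longrightarrow> P j \<Longrightarrow> j \<le> n - (LEAST i. P (n - i))"
proof -
  show "P (n - (LEAST i. P (n - i)))"
    using assms by (intro LeastI[where P="\<lambda>i. P (n - i)" and k=n]) simp
  assume "j \<le> n" "P j"
  then have "(LEAST i. P (n - i)) \<le> n - j"
    by (intro Least_le) simp
  then show "j \<le> n - (LEAST i. P (n - i))"
    using \<open>j \<le> n\<close> by simp
qed

lemma computable_greatest_below:
  assumes "decidable A 2 (\<lambda>xs. P (xs ! 1) (xs ! 0))" "\<And>n. P n 0"
  shows "computable A 1 (\<lambda>xs. hd xs - (LEAST i. P (hd xs) (hd xs - i)))"
proof -
  have "computable A 2 (\<lambda>xs. if P (xs ! 1) (xs ! 1 - xs ! 0) then 1 else 0)"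
    using computable_comp2[OF assms(1)[unfolded decidable_def], of 2 "\<lambda>xs. xs ! 1 - xs ! 0" "\<lambda>xs. xs ! 1"]
    by (simp add: computable_diff computable_proj)
  moreover have "\<exists>i. P n (n - i)" for n
    using assms(2)[of n] by (intro exI[of _ n]) simp
  ultimately have "computable A 1 (\<lambda>xs. LEAST i. P ((i # xs) ! 1) ((i # xs) ! 1 - (i # xs) ! 0))"
    unfolding decidable_def numeral_2_eq_2
    by (intro computable_Least[unfolded decidable_def]) auto
  then show ?thesis
    by (intro computable_diff computable_hd) (auto elim!: computable_cong simp: length_Suc_conv)
qed

section \<open>Turing reducibility and Scott sets\<close>

lemma turing_le_iff_decidable: "turing_le B A \<longleftrightarrow> decidable A 1 (\<lambda>xs. hd xs \<in> B)"
proof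
  assume "turing_le B A"
  then obtain f where "\<forall>n. reval A f [n] (if n \<in> B then 1 else 0)"
    unfolding turing_le_def by blast
  then show "decidable A 1 (\<lambda>xs. hd xs \<in> B)"
    unfolding decidable_def computable_def by (metis One_nat_def length_0_conv length_Suc_conv list.sel(1))
next
  assume "decidable A 1 (\<lambda>xs. hd xs \<in> B)"
  then obtain f where "\<forall>xs. length xs = 1 \<longrightarrow> reval A f xs (if hd xs \<in> B then 1 else 0)"
    unfolding decidable_def computable_def by blast
  then show "turing_le B A"
    unfolding turing_le_def by (metis One_nat_def length_Cons list.sel(1) list.size(3))
qed

lemma turing_le_refl: "turing_le A A"
  using decidable_oracle turing_le_iff_decidable by blast

lemma turing_le_Collect: "decidable A 1 (\<lambda>xs. P (hd xs)) \<Longrightarrow> turing_le {n. P n} A"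
  unfolding turing_le_iff_decidable by simp

lemma decidable_mem: "turing_le B A \<Longrightarrow> computable A k G \<Longrightarrow> decidable A k (\<lambda>xs. G xs \<in> B)"
  unfolding turing_le_iff_decidable decidable_def using computable_comp1 by fastforce

lemma prod_encode_mem_graph_code: "prod_encode (n, m) \<in> graph_code f \<longleftrightarrow> m = f n"
  unfolding graph_code_def by (auto simp: prod_encode_eq)

lemma computable_graph_code:
  assumes "turing_le (graph_code f) A" "computable A k G"
  shows "computable A k (\<lambda>xs. f (G xs))"
proof -
  have "decidable A (Suc k) (\<lambda>ys. prod_encode (G (tl ys), ys ! 0) \<in> graph_code f)"
    by (intro decidable_mem[OF assms(1)] computable_prod_encode computable_tl[OF assms(2)] computable_proj) simp
  then have "computable A k (\<lambda>xs. LEAST m. prod_encode (G xs, m) \<in> graph_code f)"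
    using computable_Least[where P="\<lambda>ys. prod_encode (G (tl ys), ys ! 0) \<in> graph_code f"]
    by (simp add: prod_encode_mem_graph_code)
  then show ?thesis by (rule computable_cong) (simp add: Least_equality prod_encode_mem_graph_code)
qed

lemma turing_le_graph_code:
  assumes "computable A 1 (\<lambda>xs. f (hd xs))"
  shows "turing_le (graph_code f) A"
proof -
  have "graph_code f = {x. snd (prod_decode x) = f (fst (prod_decode x))}"
    unfolding graph_code_def by (auto, metis prod.collapse prod_decode_inverse)
  moreover have "decidable A 1 (\<lambda>xs. snd (prod_decode (hd xs)) = f (fst (prod_decode (hd xs))))"
    using computable_comp1[OF assms computable_prod_decode(1)[OF computable_hd]]
    by (intro decidable_eq computable_prod_decode computable_hd) simp
  ultimately show ?thesis using turing_le_Collect by simp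
qed

definition join_sets :: "nat set list \<Rightarrow> nat set" where
  "join_sets L = {prod_encode (i, a) | i a. i < length L \<and> a \<in> L ! i}"

lemma turing_le_join_sets:
  assumes "B \<in> set L"
  shows "turing_le B (join_sets L)"
proof -
  obtain i where i: "i < length L" "L ! i = B" using assms by (auto simp: in_set_conv_nth)
  have "decidable (join_sets L) 1 (\<lambda>xs. prod_encode (i, hd xs) \<in> join_sets L)"
    by (intro decidable_mem turing_le_refl computable_prod_encode computable_const computable_hd)
  moreover have "prod_encode (i, a) \<in> join_sets L \<longleftrightarrow> a \<in> B" for a
    using i unfolding join_sets_def by (auto simp: prod_encode_eq)
  ultimately show ?thesis using turing_le_Collect[of "join_sets L" "\<lambda>a. a \<in> B"] by simp
qed

lemma scott_set_turing_le: "scott_set X \<Longrightarrow> A \<in> X \<Longrightarrow> turing_le B A \<Longrightarrow> B \<in> X"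
  unfolding scott_set_def by blast

lemma scott_set_Collect: "scott_set X \<Longrightarrow> A \<in> X \<Longrightarrow> decidable A 1 (\<lambda>xs. P (hd xs)) \<Longrightarrow> {n. P n} \<in> X"
  using scott_set_turing_le turing_le_Collect by blast

lemma scott_set_empty: "scott_set X \<Longrightarrow> {} \<in> X"
  unfolding scott_set_def by (metis Compl_partition Compl_UNIV_eq ex_in_conv)

lemma scott_set_decidable: "scott_set X \<Longrightarrow> decidable {} 1 (\<lambda>xs. P (hd xs)) \<Longrightarrow> {n. P n} \<in> X"
  using scott_set_Collect scott_set_empty by blast

lemma scott_set_recursive: "scott_set X \<Longrightarrow> recursive_set B \<Longrightarrow> B \<in> X"
  unfolding recursive_set_def using scott_set_empty scott_set_turing_le by blast

lemma scott_set_join_sets: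
  assumes X: "scott_set X" and L: "set L \<subseteq> X"
  shows "join_sets L \<in> X"
  using L
proof (induction L)
  case Nil
  then show ?case using scott_set_empty[OF X] by (simp add: join_sets_def)
next
  case (Cons B L)
  let ?head = "{x. fst (prod_decode x) = 0 \<and> snd (prod_decode x) \<in> B}"
  let ?tail = "{x. fst (prod_decode x) \<noteq> 0 \<and> prod_encode (fst (prod_decode x) - 1, snd (prod_decode x)) \<in> join_sets L}"
  have "?head \<in> X"
    by (intro scott_set_Collect[OF X, of B] decidable_conj decidable_eq decidable_mem turing_le_refl
        computable_prod_decode computable_hd computable_const) (use Cons.prems in simp)
  moreover have "?tail \<in> X"
    by (intro scott_set_Collect[OF X, of "join_sets L"] decidable_conj decidable_not decidable_eq
        decidable_mem turing_le_refl computable_prod_decode computable_hd computable_const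
        computable_prod_encode computable_diff Cons.IH) (use Cons.prems in simp)
  moreover have "join_sets (B # L) = ?head \<union> ?tail"
  proof (rule set_eqI)
    fix x
    obtain i a where x: "x = prod_encode (i, a)" by (metis prod_decode_inverse prod.collapse)
    show "x \<in> join_sets (B # L) \<longleftrightarrow> x \<in> ?head \<union> ?tail"
      unfolding x join_sets_def by (cases i) (auto simp: prod_encode_eq)
  qed
  ultimately show ?case using X unfolding scott_set_def by simp
qed

section \<open>Syntax and semantics\<close>

lemma finite_fvt: "finite (fvt t)"
  by (induction t) auto

lemma finite_fv: "finite (fv p)"
  by (induction p) (auto simp: finite_fvt)

lemma tval_cong:
  "(\<forall>i\<in>fvt t. e i = e' i) \<Longrightarrow> (\<forall>i\<in>cst_t t. c i = c' i) \<Longrightarrow> tval S c e t = tval S c' e' t"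
  by (induction t) auto

lemma sat_cong:
  "(\<forall>i\<in>fv p. e i = e' i) \<Longrightarrow> (\<forall>i\<in>csts p. c i = c' i) \<Longrightarrow> sat S c e p = sat S c' e' p"
proof (induction p arbitrary: e e')
  case (FEq a b)
  then show ?case using tval_cong[of a e e' c c' S] tval_cong[of b e e' c c' S] by auto
next
  case (FLt a b)
  then show ?case using tval_cong[of a e e' c c' S] tval_cong[of b e e' c c' S] by auto
next
  case (FImp p q)
  have "sat S c e p = sat S c' e' p" "sat S c e q = sat S c' e' q"
    using FImp.prems by (auto intro!: FImp.IH)
  then show ?case by simp
next
  case (FAll x p)
  have "sat S c (e(x := a)) p = sat S c' (e'(x := a)) p" for a
    by (rule FAll.IH) (use FAll.prems in auto)
  then show ?case by simp
qed simp

lemma sat_langA_cong: "langA p \<Longrightarrow> (\<forall>i\<in>fv p. e i = e' i) \<Longrightarrow> sat S c e p = sat S c' e' p"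
  using sat_cong unfolding langA_def by blast

lemma tval_in_dm:
  "is_struc S \<Longrightarrow> cst_t t = {} \<Longrightarrow> \<forall>i\<in>fvt t. e i \<in> dm S \<Longrightarrow> tval S c e t \<in> dm S"
  by (induction t) (auto simp: is_struc_def)

lemma sat_FEx: "sat S c e (FEx x p) \<longleftrightarrow> (\<exists>a\<in>dm S. sat S c (e(x := a)) p)"
  unfolding FEx_def by simp

lemma sat_FConj: "sat S c e (FConj p q) \<longleftrightarrow> sat S c e p \<and> sat S c e q"
  unfolding FConj_def by simp

lemma inj_code_t: "inj code_t"
proof (rule injI)
  show "code_t s = code_t t \<Longrightarrow> s = t" for s t
    by (induction s arbitrary: t; case_tac t) (auto simp: prod_encode_eq)
qed

lemma inj_code: "inj code"
proof (rule injI)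
  show "code p = code q \<Longrightarrow> p = q" for p q
    by (induction p arbitrary: q; case_tac q) (auto simp: prod_encode_eq dest: injD[OF inj_code_t])
qed

lemma code_in_ediag: "code p \<in> ediag M \<longleftrightarrow> sentence p \<and> csts p \<subseteq> dm M \<and> sat M id (\<lambda>_. zr M) p"
  unfolding ediag_def using injD[OF inj_code] by blast

text \<open>The sentence \<open>\<forall>y. y = c\<^sub>v \<longrightarrow> \<dots>\<close> of the elementary diagram language
  asserts \<open>p\<close> with each variable \<open>y\<close> interpreted as the element \<open>v\<close>, without substitution.\<close>

fun bind_consts :: "(nat \<times> nat) list \<Rightarrow> fm \<Rightarrow> fm" where
  "bind_consts [] p = p"
| "bind_consts ((y, v) # r) p = FAll y (FImp (FEq (TVar y) (TCst v)) (bind_consts r p))"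

lemma fv_bind_consts: "fv (bind_consts r p) = fv p - fst ` set r"
  by (induction r p rule: bind_consts.induct) auto

lemma csts_bind_consts: "csts (bind_consts r p) = csts p \<union> snd ` set r"
  by (induction r p rule: bind_consts.induct) auto

lemma sat_bind_consts:
  "\<forall>(y, v)\<in>set r. v \<in> dm M \<Longrightarrow>
   sat M id e (bind_consts r p) = sat M id (foldl (\<lambda>e (y, v). e(y := v)) e r) p"
  by (induction r p arbitrary: e rule: bind_consts.induct) (auto simp: fun_upd_def)

lemma foldl_fun_upd_map:
  "foldl (\<lambda>e (y, v). e(y := v)) e (map (\<lambda>y. (y, g y)) ys) = (\<lambda>i. if i \<in> set ys then g i else e i)"
  by (induction ys arbitrary: e) (auto simp: fun_eq_iff)

lemma bind_consts_in_ediag: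
  assumes "langA p" "fv p \<subseteq> set ys"
  shows "code (bind_consts (map (\<lambda>y. (y, g y)) ys) p) \<in> ediag M \<longleftrightarrow>
    (\<forall>y\<in>set ys. g y \<in> dm M) \<and> sat M c g p"
proof -
  let ?q = "bind_consts (map (\<lambda>y. (y, g y)) ys) p"
  have "sentence ?q"
    using assms(2) unfolding sentence_def fv_bind_consts by (auto simp: image_image)
  moreover have "csts ?q = g ` set ys"
    using assms(1) unfolding csts_bind_consts langA_def by (auto simp: image_image)
  moreover have "sat M id (\<lambda>_. zr M) ?q = sat M c g p" if "\<forall>y\<in>set ys. g y \<in> dm M"
  proof -
    have "sat M id (\<lambda>_. zr M) ?q = sat M id (\<lambda>i. if i \<in> set ys then g i else zr M) p"
      using that by (subst sat_bind_consts) (auto simp: foldl_fun_upd_map)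
    also have "\<dots> = sat M c g p"
      by (rule sat_langA_cong[OF assms(1)]) (use assms(2) in auto)
    finally show ?thesis .
  qed
  ultimately show ?thesis unfolding code_in_ediag by auto
qed

lemma computable_code_bind_consts:
  assumes "\<forall>y\<in>set ys. computable A k (\<lambda>xs. h xs y)" "computable A k (\<lambda>xs. code (P xs))"
  shows "computable A k (\<lambda>xs. code (bind_consts (map (\<lambda>y. (y, h xs y)) ys) (P xs)))"
  using assms(1) by (induction ys) (auto intro!: computable_prod_encode computable_const assms(2))

lemma decidable_sat:
  assumes "turing_le (ediag M) A"
    and "\<forall>y\<in>set ys. computable A k (\<lambda>xs. h xs y)" "computable A k (\<lambda>xs. code (P xs))"
    and "\<And>xs. langA (P xs)" "\<And>xs. fv (P xs) \<subseteq> set ys"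
  shows "decidable A k (\<lambda>xs. (\<forall>y\<in>set ys. h xs y \<in> dm M) \<and> sat M c (h xs) (P xs))"
  using decidable_mem[OF assms(1) computable_code_bind_consts[OF assms(2,3)]]
  by (rule decidable_cong) (simp add: bind_consts_in_ediag assms(4,5))

lemma langA_FEx: "langA (FEx x p) \<longleftrightarrow> langA p"
  unfolding langA_def FEx_def by simp

lemma fv_FEx: "fv (FEx x p) = fv p - {x}"
  unfolding FEx_def by simp

lemma computable_code_FEx:
  "computable A k (\<lambda>xs. code (P xs)) \<Longrightarrow> computable A k (\<lambda>xs. code (FEx x (P xs)))"
  unfolding FEx_def by (auto intro!: computable_prod_encode computable_const)

fun conj_below :: "fm set \<Rightarrow> nat \<Rightarrow> fm" where
  "conj_below p 0 = FEq TZero TZero"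
| "conj_below p (Suc m) = (if m \<in> code ` p then FConj (inv code m) (conj_below p m) else conj_below p m)"

lemma inv_code_code [simp]: "inv code (code q) = q"
  by (rule inv_f_f[OF inj_code])

lemma langA_conj_below: "p \<subseteq> {q. langA q} \<Longrightarrow> langA (conj_below p j)"
  by (induction j) (auto simp: langA_def FConj_def)

lemma fv_conj_below: "fv (conj_below p j) \<subseteq> \<Union> (fv ` p)"
  by (induction j) (auto simp: FConj_def)

lemma sat_conj_below: "sat S c e (conj_below p j) \<longleftrightarrow> (\<forall>q\<in>p. code q < j \<longrightarrow> sat S c e q)"
proof (induction j)
  case (Suc m)
  then show ?case
    by (auto simp: sat_FConj less_Suc_eq dest: injD[OF inj_code])
qed simp

lemma computable_code_conj_below:
  assumes "turing_le (code ` p) A" "computable A k G"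
  shows "computable A k (\<lambda>xs. code (conj_below p (G xs)))"
proof -
  let ?step = "\<lambda>xs. if xs ! 1 \<in> code ` p
    then prod_encode (2, prod_encode (3, prod_encode (xs ! 1, prod_encode (2, xs ! 0)))) else xs ! 0"
  have "computable A 2 ?step"
    by (intro computable_if decidable_mem[OF assms(1)] computable_prod_encode computable_const computable_proj)
      simp_all
  moreover have "code (conj_below p (Suc m)) = ?step [code (conj_below p m), m]" for m
    by (auto simp: FConj_def)
  ultimately have "computable A 1 (\<lambda>xs. code (conj_below p (hd xs)))"
    by (rule computable_unary_prim_rec)
  from computable_comp1[OF this assms(2)] show ?thesis by simp
qed

section \<open>Structures coded in a Scott set\<close>

locale coded_structure =
  fixes X :: "nat set set" and M :: "nat struc"
  assumes scott: "scott_set X" and struc: "is_struc M" and coded: "coded_in M X"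
begin

abbreviation PX :: "(nat \<Rightarrow> nat) set" where "PX \<equiv> prodX X M"

lemma zr_in_dm: "zr M \<in> dm M"
  using struc unfolding is_struc_def by simp

lemma prodX_in_dm: "f \<in> PX \<Longrightarrow> f n \<in> dm M"
  unfolding prodX_def by simp

lemma prodX_intro:
  assumes "\<And>n. f n \<in> dm M" "A \<in> X" "computable A 1 (\<lambda>xs. f (hd xs))"
  shows "f \<in> PX"
  unfolding prodX_def using assms scott_set_turing_le[OF scott assms(2) turing_le_graph_code] by simp

lemma const_in_prodX: "c \<in> dm M \<Longrightarrow> (\<lambda>_. c) \<in> PX"
  using prodX_intro[OF _ scott_set_empty[OF scott] computable_const] by blast

definition adequate_oracle :: "(nat \<Rightarrow> nat \<Rightarrow> nat) \<Rightarrow> nat list \<Rightarrow> nat set \<Rightarrow> bool" where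
  "adequate_oracle f ys A \<longleftrightarrow>
     turing_le (ediag M) A \<and> (\<forall>y\<in>set ys. f y \<in> PX \<and> turing_le (graph_code (f y)) A)"

lemma adequate_oracle_exists:
  assumes "\<forall>y\<in>set ys. f y \<in> PX" "set Bs \<subseteq> X"
  obtains A where "A \<in> X" "adequate_oracle f ys A" "\<forall>B\<in>set Bs. turing_le B A"
proof
  let ?L = "ediag M # Bs @ map (\<lambda>y. graph_code (f y)) ys"
  show "join_sets ?L \<in> X"
    using assms coded unfolding coded_in_def prodX_def by (intro scott_set_join_sets[OF scott]) auto
  show "adequate_oracle f ys (join_sets ?L)" "\<forall>B\<in>set Bs. turing_le B (join_sets ?L)"
    unfolding adequate_oracle_def using assms(1) by (auto intro!: turing_le_join_sets)
qed

lemma decidable_sat_upd: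
  assumes A: "adequate_oracle f ys A"
    and comp: "computable A k N" "computable A k V" "computable A k (\<lambda>xs. code (P xs))"
    and P: "\<And>xs. langA (P xs)" "\<And>xs. fv (P xs) \<subseteq> insert x (set ys)"
  shows "decidable A k (\<lambda>xs. V xs \<in> dm M \<and> sat M c ((\<lambda>i. f i (N xs))(x := V xs)) (P xs))"
proof -
  have "computable A k (\<lambda>xs. ((\<lambda>i. f i (N xs))(x := V xs)) y)" if "y \<in> set (x # ys)" for y
    using A comp that unfolding adequate_oracle_def by (cases "y = x") (auto intro: computable_graph_code)
  then have "decidable A k (\<lambda>xs. (\<forall>y\<in>set (x # ys). ((\<lambda>i. f i (N xs))(x := V xs)) y \<in> dm M) \<and>
      sat M c ((\<lambda>i. f i (N xs))(x := V xs)) (P xs))"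
    using A P comp unfolding adequate_oracle_def by (intro decidable_sat) auto
  then show ?thesis
    by (rule decidable_cong) (use A in \<open>auto simp: adequate_oracle_def prodX_in_dm\<close>)
qed

lemma decidable_sat_ex:
  assumes A: "adequate_oracle f ys A"
    and comp: "computable A k N" "computable A k (\<lambda>xs. code (P xs))"
    and P: "\<And>xs. langA (P xs)" "\<And>xs. fv (P xs) \<subseteq> insert x (set ys)"
  shows "decidable A k (\<lambda>xs. \<exists>a\<in>dm M. sat M c ((\<lambda>i. f i (N xs))(x := a)) (P xs))"
proof -
  have "decidable A k (\<lambda>xs. (\<forall>y\<in>set ys. f y (N xs) \<in> dm M) \<and> sat M c (\<lambda>i. f i (N xs)) (FEx x (P xs)))"
    using A P comp unfolding adequate_oracle_def
    by (intro decidable_sat computable_code_FEx) (auto simp: langA_FEx fv_FEx intro: computable_graph_code)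
  then show ?thesis
    by (rule decidable_cong) (use A in \<open>auto simp: adequate_oracle_def prodX_in_dm sat_FEx\<close>)
qed

lemma sat_set_in_X:
  assumes "langA p" "\<forall>i\<in>fv p. f i \<in> PX"
  shows "{n. sat M c (\<lambda>i. f i n) p} \<in> X"
proof -
  define ys where "ys = sorted_list_of_set (fv p)"
  have ys: "set ys = fv p" unfolding ys_def by (simp add: finite_fv)
  obtain A where A: "A \<in> X" "adequate_oracle f ys A"
    using adequate_oracle_exists[of ys f "[]"] assms(2) ys by auto
  then have "\<forall>y\<in>set ys. computable A 1 (\<lambda>xs. f y (hd xs))"
    using computable_graph_code[OF _ computable_hd] unfolding adequate_oracle_def by blast
  then have "decidable A 1 (\<lambda>xs. (\<forall>y\<in>set ys. f y (hd xs) \<in> dm M) \<and> sat M c (\<lambda>i. f i (hd xs)) p)"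
    using A(2) assms(1) ys unfolding adequate_oracle_def by (intro decidable_sat computable_const) auto
  then show ?thesis
    using scott_set_Collect[OF scott A(1)] assms(2) ys by (simp add: prodX_in_dm)
qed

lemma Least_in_prodX:
  assumes "A \<in> X" "decidable A 2 (\<lambda>xs. R (xs ! 1) (xs ! 0))"
    and "\<And>n. \<exists>a. R n a" "\<And>n a. R n a \<Longrightarrow> a \<in> dm M"
  shows "(\<lambda>n. LEAST a. R n a) \<in> PX"
proof (rule prodX_intro[OF _ assms(1)])
  show "(LEAST a. R n a) \<in> dm M" for n
    using assms(3,4) by (metis LeastI)
  have "computable A 1 (\<lambda>xs. LEAST a. R ((a # xs) ! 1) ((a # xs) ! 0))"
    using assms(2,3) by (intro computable_Least) (auto simp: numeral_2_eq_2)
  then show "computable A 1 (\<lambda>xs. LEAST a. R (hd xs) a)"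
    by (rule computable_cong) (auto simp: length_Suc_conv)
qed

lemma skolem_function_in_prodX:
  assumes "langA p" "\<forall>i\<in>fv p - {x}. f i \<in> PX"
  shows "\<exists>g\<in>PX. \<forall>n. (\<exists>a\<in>dm M. sat M c ((\<lambda>i. f i n)(x := a)) p) \<longrightarrow>
    sat M c ((\<lambda>i. f i n)(x := g n)) p"
proof -
  define ys where "ys = sorted_list_of_set (fv p - {x})"
  have ys: "set ys = fv p - {x}" by (simp add: ys_def finite_fv)
  obtain A where A: "A \<in> X" "adequate_oracle f ys A"
    using adequate_oracle_exists[of ys f "[]"] assms(2) ys by auto
  define Ex where "Ex n \<longleftrightarrow> (\<exists>a\<in>dm M. sat M c ((\<lambda>i. f i n)(x := a)) p)" for n
  define W where "W n a \<longleftrightarrow> a \<in> dm M \<and> sat M c ((\<lambda>i. f i n)(x := a)) p" for n a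
  \<comment> \<open>the second disjunct makes the search for a witness total\<close>
  define R where "R n a \<longleftrightarrow> W n a \<or> \<not> Ex n \<and> a = zr M" for n a
  have "decidable A 2 (\<lambda>xs. W (xs ! 1) (xs ! 0))"
    unfolding W_def using A(2) assms(1) ys
    by (intro decidable_sat_upd computable_proj computable_const) auto
  moreover have "decidable A 2 (\<lambda>xs. Ex (xs ! 1))"
    unfolding Ex_def using A(2) assms(1) ys
    by (intro decidable_sat_ex computable_proj computable_const) auto
  ultimately have "decidable A 2 (\<lambda>xs. R (xs ! 1) (xs ! 0))"
    unfolding R_def by (intro decidable_disj decidable_conj decidable_not decidable_eq computable_proj
        computable_const) simp_all
  moreover have "\<exists>a. R n a" for n
    unfolding R_def W_def Ex_def by blast
  moreover have "R n a \<Longrightarrow> a \<in> dm M" for n a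
    using zr_in_dm unfolding R_def W_def by blast
  ultimately have "(\<lambda>n. LEAST a. R n a) \<in> PX"
    by (rule Least_in_prodX[OF A(1)])
  moreover have "W n (LEAST a. R n a)" if "Ex n" for n
    using LeastI_ex[of "R n"] that unfolding R_def W_def Ex_def by blast
  ultimately show ?thesis
    unfolding Ex_def W_def by (intro bexI[where x="\<lambda>n. LEAST a. R n a"]) auto
qed

lemma term_function_in_prodX:
  assumes "cst_t t = {}" "\<forall>i\<in>fvt t. f i \<in> PX"
  shows "(\<lambda>n. tval M c (\<lambda>i. f i n) t) \<in> PX"
proof -
  obtain z where z: "z \<notin> fvt t"
    using ex_new_if_finite[OF infinite_UNIV_nat finite_fvt] by blast
  have "langA (FEq (TVar z) t)" "\<forall>i\<in>fv (FEq (TVar z) t) - {z}. f i \<in> PX"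
    using assms by (auto simp: langA_def)
  then obtain g where g: "g \<in> PX"
    "\<And>n. (\<exists>a\<in>dm M. sat M c ((\<lambda>i. f i n)(z := a)) (FEq (TVar z) t)) \<Longrightarrow>
       sat M c ((\<lambda>i. f i n)(z := g n)) (FEq (TVar z) t)"
    using skolem_function_in_prodX by blast
  have tval_upd: "tval M c ((\<lambda>i. f i n)(z := a)) t = tval M c (\<lambda>i. f i n) t" for n a
    using z by (intro tval_cong) auto
  have "tval M c (\<lambda>i. f i n) t \<in> dm M" for n
    using tval_in_dm[OF struc assms(1)] assms(2) prodX_in_dm by auto
  then have "g n = tval M c (\<lambda>i. f i n) t" for n
    using g(2)[of n] by (auto simp: tval_upd)
  then have "(\<lambda>n. tval M c (\<lambda>i. f i n) t) = g"
    by auto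
  then show ?thesis
    using g(1) by simp
qed

lemma type_witness_in_prodX:
  assumes p: "p \<subseteq> {q. langA q}" "code ` p \<in> X" "finite (\<Union> (fv ` p))"
    and f: "\<forall>i\<in>\<Union> (fv ` p) - {x}. f i \<in> PX"
  shows "\<exists>g\<in>PX. \<forall>n j. j \<le> n \<longrightarrow> (\<exists>a\<in>dm M. sat M c ((\<lambda>i. f i n)(x := a)) (conj_below p j)) \<longrightarrow>
    sat M c ((\<lambda>i. f i n)(x := g n)) (conj_below p j)"
proof -
  define ys where "ys = sorted_list_of_set (\<Union> (fv ` p) - {x})"
  have ys: "set ys = \<Union> (fv ` p) - {x}" by (simp add: ys_def p(3))
  obtain A where A: "A \<in> X" "adequate_oracle f ys A" "turing_le (code ` p) A"
    using adequate_oracle_exists[of ys f "[code ` p]"] f p(2) ys by auto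
  have lP: "langA (conj_below p j)" and fvP: "fv (conj_below p j) \<subseteq> insert x (set ys)" for j
    using langA_conj_below[OF p(1)] fv_conj_below ys by auto
  define Ex where "Ex n j \<longleftrightarrow> (\<exists>a\<in>dm M. sat M c ((\<lambda>i. f i n)(x := a)) (conj_below p j))" for n j
  define W where "W n j a \<longleftrightarrow> a \<in> dm M \<and> sat M c ((\<lambda>i. f i n)(x := a)) (conj_below p j)" for n j a
  define s where "s n = n - (LEAST i. Ex n (n - i))" for n
  have Ex0: "Ex n 0" for n
    unfolding Ex_def using zr_in_dm by auto
  have "decidable A 2 (\<lambda>xs. Ex (xs ! 1) (xs ! 0))"
    unfolding Ex_def using A(2) lP fvP
    by (intro decidable_sat_ex computable_proj computable_code_conj_below[OF A(3)]) auto
  then have "computable A 1 (\<lambda>xs. s (hd xs))"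
    unfolding s_def using Ex0 by (rule computable_greatest_below)
  from computable_comp1[OF this computable_proj[of 1 2]]
  have "computable A 2 (\<lambda>xs. s (xs ! 1))" by simp
  then have "decidable A 2 (\<lambda>xs. W (xs ! 1) (s (xs ! 1)) (xs ! 0))"
    unfolding W_def using A(2) lP fvP
    by (intro decidable_sat_upd computable_proj computable_code_conj_below[OF A(3)]) auto
  moreover have "\<exists>a. W n (s n) a" for n
    using greatest_below_via_Least(1)[of "Ex n", OF Ex0] unfolding s_def Ex_def W_def by blast
  ultimately have "(\<lambda>n. LEAST a. W n (s n) a) \<in> PX"
    by (rule Least_in_prodX[OF A(1)]) (simp add: W_def)
  moreover have "sat M c ((\<lambda>i. f i n)(x := LEAST a. W n (s n) a)) (conj_below p j)"
    if "j \<le> n" "Ex n j" for n j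
  proof -
    have "j \<le> s n"
      unfolding s_def using greatest_below_via_Least(2)[of "Ex n", OF Ex0 that] .
    moreover have "W n (s n) (LEAST a. W n (s n) a)"
      using LeastI_ex \<open>\<And>n. \<exists>a. W n (s n) a\<close> by blast
    ultimately show ?thesis
      unfolding W_def sat_conj_below by auto
  qed
  ultimately show ?thesis
    unfolding Ex_def by (intro bexI[where x="\<lambda>n. LEAST a. W n (s n) a"]) auto
qed

end

section \<open>The ultrapower\<close>

locale coded_ultrapower = coded_structure +
  fixes U :: "nat set set"
  assumes ultra: "ultrafilter_on X U"
begin

abbreviation K :: "(nat \<Rightarrow> nat) set struc" where "K \<equiv> ultrapower X M U"
abbreviation cls :: "(nat \<Rightarrow> nat) \<Rightarrow> (nat \<Rightarrow> nat) set" where "cls \<equiv> ucls X M U"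

lemma U_UNIV: "UNIV \<in> U"
  and U_empty: "{} \<notin> U"
  and U_Int: "A \<in> U \<Longrightarrow> B \<in> U \<Longrightarrow> A \<inter> B \<in> U"
  and U_mono: "A \<in> U \<Longrightarrow> B \<in> X \<Longrightarrow> A \<subseteq> B \<Longrightarrow> B \<in> U"
  using ultra unfolding ultrafilter_on_def by blast+

lemma U_Compl_iff: "A \<in> X \<Longrightarrow> - A \<in> U \<longleftrightarrow> A \<notin> U"
  using ultra U_Int U_empty unfolding ultrafilter_on_def by (metis Compl_disjoint)

lemma U_imp_iff:
  assumes "A \<in> X" "B \<in> X"
  shows "- A \<union> B \<in> U \<longleftrightarrow> (A \<in> U \<longrightarrow> B \<in> U)"
proof
  assume "- A \<union> B \<in> U"
  then have "A \<in> U \<Longrightarrow> A \<inter> (- A \<union> B) \<in> U"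
    by (rule U_Int[rotated])
  then show "A \<in> U \<longrightarrow> B \<in> U"
    using U_mono[OF _ assms(2)] by blast
next
  have "- A \<union> B \<in> X"
    using assms scott unfolding scott_set_def by blast
  moreover assume "A \<in> U \<longrightarrow> B \<in> U"
  then have "- A \<in> U \<or> B \<in> U"
    using U_Compl_iff[OF assms(1)] by blast
  ultimately show "- A \<union> B \<in> U"
    using U_mono by blast
qed

lemma U_cong:
  assumes "A \<in> X" "B \<in> X" "D \<in> U" "\<And>n. n \<in> D \<Longrightarrow> n \<in> A \<longleftrightarrow> n \<in> B"
  shows "A \<in> U \<longleftrightarrow> B \<in> U"
  using U_Int[OF _ assms(3)] U_mono assms by (metis IntE subsetI)

lemma eq_set_in_X: "F \<in> PX \<Longrightarrow> G \<in> PX \<Longrightarrow> {n. F n = G n} \<in> X"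
  using sat_set_in_X[of "FEq (TVar 0) (TVar 1)" "\<lambda>i. if i = 0 then F else G"] by (simp add: langA_def)

lemma lt_set_in_X: "F \<in> PX \<Longrightarrow> G \<in> PX \<Longrightarrow> {n. lt M (F n) (G n)} \<in> X"
  using sat_set_in_X[of "FLt (TVar 0) (TVar 1)" "\<lambda>i. if i = 0 then F else G"] by (simp add: langA_def)

lemma ad_in_prodX: "F \<in> PX \<Longrightarrow> G \<in> PX \<Longrightarrow> (\<lambda>n. ad M (F n) (G n)) \<in> PX"
  using term_function_in_prodX[of "TPlus (TVar 0) (TVar 1)" "\<lambda>i. if i = 0 then F else G"] by simp

lemma ml_in_prodX: "F \<in> PX \<Longrightarrow> G \<in> PX \<Longrightarrow> (\<lambda>n. ml M (F n) (G n)) \<in> PX"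
  using term_function_in_prodX[of "TTimes (TVar 0) (TVar 1)" "\<lambda>i. if i = 0 then F else G"] by simp

lemma in_cls: "F \<in> PX \<Longrightarrow> F \<in> cls F"
  using U_UNIV unfolding ucls_def by simp

lemma cls_eq_iff: "F \<in> PX \<Longrightarrow> G \<in> PX \<Longrightarrow> cls F = cls G \<longleftrightarrow> {n. F n = G n} \<in> U"
proof
  assume "G \<in> PX" "cls F = cls G"
  then have "G \<in> cls F"
    using in_cls by simp
  then show "{n. F n = G n} \<in> U"
    unfolding ucls_def by simp
next
  assume FG: "F \<in> PX" "G \<in> PX" "{n. F n = G n} \<in> U"
  have "{n. F n = H n} \<in> U \<longleftrightarrow> {n. G n = H n} \<in> U" if "H \<in> PX" for H
    by (rule U_cong[OF eq_set_in_X eq_set_in_X FG(3)]) (use FG that in auto)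
  then show "cls F = cls G"
    unfolding ucls_def by blast
qed

lemma urep_cls:
  assumes "F \<in> PX"
  shows "urep (cls F) \<in> PX \<and> {n. urep (cls F) n = F n} \<in> U"
proof -
  have "urep (cls F) \<in> cls F"
    unfolding urep_def by (rule someI[where P="\<lambda>f. f \<in> cls F", OF in_cls[OF assms]])
  then show ?thesis
    unfolding ucls_def by (simp add: eq_commute)
qed

lemma dm_ultrapower: "dm K = cls ` PX"
  unfolding ultrapower_def by simp

lemma urep_in_prodX: "a \<in> dm K \<Longrightarrow> urep a \<in> PX"
  using urep_cls unfolding dm_ultrapower by blast

lemma cls_urep: "a \<in> dm K \<Longrightarrow> cls (urep a) = a"
  using urep_cls cls_eq_iff unfolding dm_ultrapower by blast

lemma cls_pointwise:
  assumes op: "\<And>F G. F \<in> PX \<Longrightarrow> G \<in> PX \<Longrightarrow> (\<lambda>n. h (F n) (G n)) \<in> PX"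
    and "F \<in> PX" "G \<in> PX"
  shows "cls (\<lambda>n. h (urep (cls F) n) (urep (cls G) n)) = cls (\<lambda>n. h (F n) (G n))"
proof -
  have "{n. urep (cls F) n = F n} \<inter> {n. urep (cls G) n = G n} \<in> U"
    using urep_cls assms(2,3) U_Int by blast
  then have "{n. h (urep (cls F) n) (urep (cls G) n) = h (F n) (G n)} \<in> U"
    by (rule U_mono) (use eq_set_in_X op urep_cls assms in auto)
  then show ?thesis
    using cls_eq_iff op urep_cls assms(2,3) by blast
qed

lemma ad_ultrapower: "F \<in> PX \<Longrightarrow> G \<in> PX \<Longrightarrow> ad K (cls F) (cls G) = cls (\<lambda>n. ad M (F n) (G n))"
  using cls_pointwise[OF ad_in_prodX] by (simp add: ultrapower_def)

lemma ml_ultrapower: "F \<in> PX \<Longrightarrow> G \<in> PX \<Longrightarrow> ml K (cls F) (cls G) = cls (\<lambda>n. ml M (F n) (G n))"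
  using cls_pointwise[OF ml_in_prodX] by (simp add: ultrapower_def)

lemma lt_ultrapower:
  assumes "F \<in> PX" "G \<in> PX"
  shows "lt K (cls F) (cls G) \<longleftrightarrow> {n. lt M (F n) (G n)} \<in> U"
proof -
  have "{n. urep (cls F) n = F n} \<inter> {n. urep (cls G) n = G n} \<in> U"
    using urep_cls assms U_Int by blast
  then have "{n. lt M (urep (cls F) n) (urep (cls G) n)} \<in> U \<longleftrightarrow> {n. lt M (F n) (G n)} \<in> U"
    by (intro U_cong lt_set_in_X assms conjunct1[OF urep_cls]) auto
  then show ?thesis
    by (simp add: ultrapower_def)
qed

lemma tval_ultrapower:
  assumes "cst_t t = {}" "\<forall>i. F i \<in> PX"
  shows "tval K cK (\<lambda>i. cls (F i)) t = cls (\<lambda>n. tval M cM (\<lambda>i. F i n) t)"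
  using assms(1)
proof (induction t)
  case (TPlus a b)
  then show ?case by (simp add: ad_ultrapower term_function_in_prodX assms(2))
next
  case (TTimes a b)
  then show ?case by (simp add: ml_ultrapower term_function_in_prodX assms(2))
qed (simp_all add: ultrapower_def)

lemma sat_upd_set_in_X:
  assumes "langA p" "\<forall>i. F i \<in> PX" "G \<in> PX"
  shows "{n. sat M c ((\<lambda>i. F i n)(x := G n)) p} \<in> X"
proof -
  have "(\<lambda>i. (F(x := G)) i n) = (\<lambda>i. F i n)(x := G n)" for n
    by auto
  then show ?thesis
    using sat_set_in_X[of p "F(x := G)" c] assms by simp
qed

lemma U_forall_iff:
  assumes p: "langA p" and F: "\<forall>i. F i \<in> PX"
  shows "(\<forall>G\<in>PX. {n. sat M c ((\<lambda>i. F i n)(x := G n)) p} \<in> U) \<longleftrightarrow>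
    {n. \<forall>a\<in>dm M. sat M c ((\<lambda>i. F i n)(x := a)) p} \<in> U"
proof
  let ?B = "{n. \<forall>a\<in>dm M. sat M c ((\<lambda>i. F i n)(x := a)) p}"
  have B: "?B \<in> X"
    using sat_set_in_X[of "FAll x p" F c] p F by (simp add: langA_def)
  assume all: "\<forall>G\<in>PX. {n. sat M c ((\<lambda>i. F i n)(x := G n)) p} \<in> U"
  obtain g where g: "g \<in> PX"
    "\<And>n. (\<exists>a\<in>dm M. \<not> sat M c ((\<lambda>i. F i n)(x := a)) p) \<Longrightarrow> \<not> sat M c ((\<lambda>i. F i n)(x := g n)) p"
    using skolem_function_in_prodX[of "FNeg p" x F c] p F by (auto simp: langA_def)
  show "?B \<in> U"
  proof (rule ccontr)
    assume "?B \<notin> U"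
    then have "- ?B \<inter> {n. sat M c ((\<lambda>i. F i n)(x := g n)) p} \<in> U"
      using U_Compl_iff[OF B] all g(1) U_Int by blast
    moreover have "- ?B \<inter> {n. sat M c ((\<lambda>i. F i n)(x := g n)) p} = {}"
      using g(2) by blast
    ultimately show False
      using U_empty by simp
  qed
next
  assume B: "{n. \<forall>a\<in>dm M. sat M c ((\<lambda>i. F i n)(x := a)) p} \<in> U"
  show "\<forall>G\<in>PX. {n. sat M c ((\<lambda>i. F i n)(x := G n)) p} \<in> U"
  proof
    fix G assume "G \<in> PX"
    then show "{n. sat M c ((\<lambda>i. F i n)(x := G n)) p} \<in> U"
      by (intro U_mono[OF B] sat_upd_set_in_X[OF p F]) (auto simp: prodX_in_dm)
  qed
qed

theorem los:
  assumes "langA p" "\<forall>i. F i \<in> PX"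
  shows "sat K cK (\<lambda>i. cls (F i)) p \<longleftrightarrow> {n. sat M cM (\<lambda>i. F i n) p} \<in> U"
  using assms
proof (induction p arbitrary: F)
  case (FEq a b)
  then have "cst_t a = {}" "cst_t b = {}"
    by (auto simp: langA_def)
  then show ?case
    using FEq.prems(2) tval_ultrapower[of _ F cK cM] cls_eq_iff term_function_in_prodX by simp
next
  case (FLt a b)
  then have "cst_t a = {}" "cst_t b = {}"
    by (auto simp: langA_def)
  then show ?case
    using FLt.prems(2) tval_ultrapower[of _ F cK cM] lt_ultrapower term_function_in_prodX by simp
next
  case (FNeg p)
  then have "langA p" by (simp add: langA_def)
  then show ?case
    using FNeg U_Compl_iff[OF sat_set_in_X] by (simp add: Collect_neg_eq)
next
  case (FImp p q)
  then have "langA p" "langA q" by (simp_all add: langA_def)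
  then show ?case
    using FImp U_imp_iff[OF sat_set_in_X sat_set_in_X] by (simp add: Collect_imp_eq Collect_neg_eq)
next
  case (FAll x p)
  then have "langA p" by (simp add: langA_def)
  have IH: "sat K cK (\<lambda>i. cls ((F(x := G)) i)) p \<longleftrightarrow> {n. sat M cM ((\<lambda>i. F i n)(x := G n)) p} \<in> U"
    if "G \<in> PX" for G
  proof -
    have "(\<lambda>i. (F(x := G)) i n) = (\<lambda>i. F i n)(x := G n)" for n
      by auto
    moreover have "\<forall>i. (F(x := G)) i \<in> PX"
      using FAll.prems(2) that by simp
    ultimately show ?thesis
      using FAll.IH[OF \<open>langA p\<close>, of "F(x := G)"] by simp
  qed
  have "sat K cK (\<lambda>i. cls (F i)) (FAll x p) \<longleftrightarrow>
      (\<forall>G\<in>PX. sat K cK (\<lambda>i. cls ((F(x := G)) i)) p)"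
    by (simp add: dm_ultrapower fun_upd_def if_distrib)
  also have "\<dots> \<longleftrightarrow> (\<forall>G\<in>PX. {n. sat M cM ((\<lambda>i. F i n)(x := G n)) p} \<in> U)"
    using IH by simp
  also have "\<dots> \<longleftrightarrow> {n. sat M cM (\<lambda>i. F i n) (FAll x p)} \<in> U"
    using U_forall_iff[OF \<open>langA p\<close> FAll.prems(2)] by simp
  finally show ?case .
qed

lemma is_struc_ultrapower: "is_struc K"
proof -
  have "zr K \<in> dm K" "on K \<in> dm K"
    using struc const_in_prodX unfolding is_struc_def ultrapower_def by auto
  moreover have "ad K a b \<in> dm K \<and> ml K a b \<in> dm K" if ab: "a \<in> dm K" "b \<in> dm K" for a b
  proof -
    obtain F G where "F \<in> PX" "G \<in> PX" "a = cls F" "b = cls G"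
      using ab unfolding dm_ultrapower by blast
    then show ?thesis
      unfolding dm_ultrapower by (simp add: ad_ultrapower ml_ultrapower ad_in_prodX ml_in_prodX)
  qed
  ultimately show ?thesis
    unfolding is_struc_def by blast
qed

lemma elem_emb_ultrapower: "elem_emb M K (\<lambda>c. cls (\<lambda>_. c))"
  unfolding elem_emb_def
proof (intro conjI allI impI)
  show "(\<lambda>c. cls (\<lambda>_. c)) ` dm M \<subseteq> dm K"
    using const_in_prodX unfolding dm_ultrapower by blast
  fix p :: fm and e :: "nat \<Rightarrow> nat"
  assume "langA p" "\<forall>i. e i \<in> dm M"
  then have "sat K (\<lambda>_. zr K) (\<lambda>i. cls (\<lambda>_. e i)) p \<longleftrightarrow> {n. sat M (\<lambda>_. zr M) e p} \<in> U"
    using los[of p "\<lambda>i _. e i"] const_in_prodX by simp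
  then show "sat M (\<lambda>_. zr M) e p \<longleftrightarrow> sat K (\<lambda>_. zr K) ((\<lambda>c. cls (\<lambda>_. c)) \<circ> e) p"
    using U_UNIV U_empty by (cases "sat M (\<lambda>_. zr M) e p") (simp_all add: o_def)
qed

lemma initial_segment_not_in_U:
  assumes "nonprincipal U"
  shows "{n. n < m} \<notin> U"
proof (induction m)
  case (Suc m)
  have X: "{n. n < m'} \<in> X" for m'
    by (intro scott_set_decidable[OF scott] decidable_less computable_hd computable_const)
  have "{n. n = m} \<in> X"
    by (intro scott_set_decidable[OF scott] decidable_eq computable_hd computable_const)
  then have "- {n. n < m} \<inter> - {m} \<in> U"
    using Suc.IH assms U_Compl_iff[OF X] U_Compl_iff U_Int unfolding nonprincipal_def by simp
  moreover have "- {n. n < m} \<inter> - {m} = - {n. n < Suc m}"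
    by auto
  ultimately show ?case
    using U_Compl_iff[OF X] by simp
qed (simp add: U_empty)

lemma cofinite_in_U:
  assumes "nonprincipal U"
  shows "{n. m \<le> n} \<in> U"
proof -
  have "{n. n < m} \<in> X"
    by (intro scott_set_decidable[OF scott] decidable_less computable_hd computable_const)
  moreover have "{n. m \<le> n} = - {n. n < m}"
    by auto
  ultimately show ?thesis
    using U_Compl_iff initial_segment_not_in_U[OF assms] by simp
qed

lemma los_upd:
  assumes "langA p" "\<forall>i. F i \<in> PX" "G \<in> PX"
  shows "sat K cK ((\<lambda>i. cls (F i))(x := cls G)) p \<longleftrightarrow> {n. sat M cM ((\<lambda>i. F i n)(x := G n)) p} \<in> U"
proof -
  have "(\<lambda>i. cls ((F(x := G)) i)) = (\<lambda>i. cls (F i))(x := cls G)"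
    "(\<lambda>i. (F(x := G)) i n) = (\<lambda>i. F i n)(x := G n)" for n
    by (auto simp: fun_eq_iff)
  then show ?thesis
    using los[of p "F(x := G)" cK cM] assms by simp
qed

lemma realizable_segment_in_U:
  assumes "p \<subseteq> {q. langA q}" "\<forall>i. F i \<in> PX" "a \<in> dm K"
    and "\<forall>q\<in>p. code q < j \<longrightarrow> sat K cK ((\<lambda>i. cls (F i))(x := a)) q"
  shows "{n. \<exists>b\<in>dm M. sat M cM ((\<lambda>i. F i n)(x := b)) (conj_below p j)} \<in> U"
proof -
  have "sat K cK (\<lambda>i. cls (F i)) (FEx x (conj_below p j))"
    using assms(3,4) by (auto simp: sat_FEx sat_conj_below)
  then show ?thesis
    using los[of "FEx x (conj_below p j)" F cK cM] assms(1,2)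
    by (simp add: langA_FEx langA_conj_below sat_FEx)
qed

lemma type_realized_in_ultrapower:
  assumes "nonprincipal U" "p \<subseteq> {q. langA q}" "\<forall>i. F i \<in> PX" "g \<in> PX"
    and realizes: "\<And>n j. j \<le> n \<Longrightarrow>
      (\<exists>b\<in>dm M. sat M cM ((\<lambda>i. F i n)(x := b)) (conj_below p j)) \<Longrightarrow>
      sat M cM ((\<lambda>i. F i n)(x := g n)) (conj_below p j)"
    and segments: "\<And>j. \<exists>a\<in>dm K. \<forall>q\<in>p. code q < j \<longrightarrow> sat K cK ((\<lambda>i. cls (F i))(x := a)) q"
    and "q \<in> p"
  shows "sat K cK ((\<lambda>i. cls (F i))(x := cls g)) q"
proof -
  let ?j = "Suc (code q)"
  let ?R = "{n. \<exists>b\<in>dm M. sat M cM ((\<lambda>i. F i n)(x := b)) (conj_below p ?j)}"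
  have "?R \<inter> {n. ?j \<le> n} \<in> U"
    using realizable_segment_in_U[OF assms(2,3)] segments cofinite_in_U[OF assms(1)] U_Int by blast
  moreover have "?R \<inter> {n. ?j \<le> n} \<subseteq> {n. sat M cM ((\<lambda>i. F i n)(x := g n)) q}"
  proof
    fix n assume "n \<in> ?R \<inter> {n. ?j \<le> n}"
    then have "sat M cM ((\<lambda>i. F i n)(x := g n)) (conj_below p ?j)"
      using realizes by blast
    then show "n \<in> {n. sat M cM ((\<lambda>i. F i n)(x := g n)) q}"
      using \<open>q \<in> p\<close> unfolding sat_conj_below by simp
  qed
  moreover have "langA q"
    using assms(2,7) by blast
  ultimately show ?thesis
    using U_mono sat_upd_set_in_X los_upd assms(3,4) by blast
qed

lemma rec_saturated_ultrapower:
  assumes "nonprincipal U"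
  shows "rec_saturated K"
  unfolding rec_saturated_def
proof (intro allI impI)
  fix p x and e :: "nat \<Rightarrow> (nat \<Rightarrow> nat) set"
  assume p: "p \<subseteq> {q. langA q}" "recursive_set (code ` p)" "finite (\<Union> (fv ` p))"
    and e: "\<forall>i. e i \<in> dm K"
    and fin_sat: "\<forall>p0\<subseteq>p. finite p0 \<longrightarrow> (\<exists>a\<in>dm K. \<forall>q\<in>p0. sat K (\<lambda>_. zr K) (e(x := a)) q)"
  define F where "F i = urep (e i)" for i
  have F: "\<forall>i. F i \<in> PX" and e_F: "e = (\<lambda>i. cls (F i))"
    using e urep_in_prodX cls_urep by (auto simp: F_def)
  have segments: "\<exists>a\<in>dm K. \<forall>q\<in>p. code q < j \<longrightarrow> sat K (\<lambda>_. zr K) (e(x := a)) q" for j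
  proof -
    have "finite {q \<in> p. code q < j}"
      using finite_vimageI[OF finite_lessThan inj_code] by (rule finite_subset[rotated]) auto
    then show ?thesis
      using fin_sat[rule_format, of "{q \<in> p. code q < j}"] by auto
  qed
  obtain g where g: "g \<in> PX" "\<And>n j. j \<le> n \<Longrightarrow>
      (\<exists>b\<in>dm M. sat M (\<lambda>_. zr M) ((\<lambda>i. F i n)(x := b)) (conj_below p j)) \<Longrightarrow>
      sat M (\<lambda>_. zr M) ((\<lambda>i. F i n)(x := g n)) (conj_below p j)"
    using type_witness_in_prodX[OF p(1) scott_set_recursive[OF scott p(2)] p(3)] F by blast
  have "sat K (\<lambda>_. zr K) (e(x := cls g)) q" if "q \<in> p" for q
    unfolding e_F by (rule type_realized_in_ultrapower[OF assms p(1) F g segments[unfolded e_F] that])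
  then show "\<exists>a\<in>dm K. \<forall>q\<in>p. sat K (\<lambda>_. zr K) (e(x := a)) q"
    using g(1) unfolding dm_ultrapower by blast
qed

end

theorem mainTheorem20:
  fixes X :: "nat set set" and T :: "nat set" and M :: "nat struc" and U :: "nat set set"
  assumes "scott_set X"
    and "T \<in> X" and "compl_cons_ext_PA T"
    and "is_struc M" and "models M T" and "coded_in M X"
    and "ultrafilter_on X U" and "nonprincipal U"
  shows "is_struc (ultrapower X M U)
    \<and> elem_emb M (ultrapower X M U) (\<lambda>c. ucls X M U (\<lambda>_. c))
    \<and> rec_saturated (ultrapower X M U)"
proof -
  interpret coded_ultrapower X M U
    using assms by unfold_locales
  show ?thesis
    using is_struc_ultrapower elem_emb_ultrapower rec_saturated_ultrapower[OF assms(8)] by blast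
qed

end
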